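(* Let $X$ be a complete nonsingular toric variety with fan $\Delta$. The following are equivalent: (i) $X$ is Fano, and every toric subvariety of $X$ is Fano; (ii) for every primitive set $\{D_1,\ldots,D_k\}$, either $\rho_1+\cdots+\rho_k=0$ or $\rho_1+\cdots+\rho_k=\rho'$ for some ray generator $\rho'$ of $\Delta$; (iii) for every maximal cone $\mu=\langle\rho_1,\ldots,\rho_n\rangle$ of $\Delta$ and every ray generator $\rho$, writing $\rho=b_1\rho_1+\cdots+b_n\rho_n$, we have $-1\le b_j\le1$ for all $j$, with $b_j=1$ for at most one $j$.
   Context: $\Delta$ is a complete fan in $N_{\mathbb R}$, $N\cong\mathbb{Z}^n$, each cone generated by part of a $\mathbb{Z}$-basis. Each ray has a primitive generator $\rho$ (ray generator) and corresponding toric divisor $D$; toric divisors meet iff their ray generators span a cone. A toric subvariety is a torus-orbit closure $X(\sigma)$, $\sigma\in\Delta$. A primitive set is a set $\{D_1,\ldots,D_k\}$ of toric divisors with $D_1\cap\cdots\cap D_k=\emptyset$ but every proper subset having nonempty intersection. *)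

theory Defs
  imports "HOL-Analysis.Analysis"
begin

text \<open>The lattice N = Z^n is modelled as the integral points of real^'n.
  A simplicial fan is given by its finite set R of ray generators and the
  set C of its cones, each cone being represented by its set of ray generators.\<close>

definition integral_vec :: "real^'n \<Rightarrow> bool" where
  "integral_vec v \<longleftrightarrow> (\<forall>i. v $ i \<in> \<int>)"

definition zbasis :: "(real^'n) set \<Rightarrow> bool" where
  "zbasis B \<longleftrightarrow> finite B \<and> card B = CARD('n) \<and> independent B \<and>
     (\<forall>b\<in>B. integral_vec b) \<and>
     (\<forall>v. integral_vec v \<longrightarrow> (\<exists>c :: real^'n \<Rightarrow> int. v = (\<Sum>b\<in>B. of_int (c b) *\<^sub>R b)))"

definition pos_cone :: "(real^'n) set \<Rightarrow> (real^'n) set" where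
  "pos_cone S = {x. \<exists>c. (\<forall>s\<in>S. c s \<ge> 0) \<and> x = (\<Sum>s\<in>S. c s *\<^sub>R s)}"

definition complete_nonsingular_fan :: "(real^'n) set \<Rightarrow> (real^'n) set set \<Rightarrow> bool" where
  "complete_nonsingular_fan R C \<longleftrightarrow>
     finite R \<and> C \<subseteq> Pow R \<and> {} \<in> C \<and>
     (\<forall>S\<in>C. \<forall>T. T \<subseteq> S \<longrightarrow> T \<in> C) \<and>
     (\<forall>\<rho>\<in>R. {\<rho>} \<in> C) \<and>
     (\<forall>S\<in>C. \<exists>B. S \<subseteq> B \<and> zbasis B) \<and>
     (\<forall>S\<in>C. \<forall>T\<in>C. pos_cone S \<inter> pos_cone T = pos_cone (S \<inter> T)) \<and>
     (\<Union>S\<in>C. pos_cone S) = UNIV"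

definition maximal_cone :: "(real^'n) set set \<Rightarrow> (real^'n) set \<Rightarrow> bool" where
  "maximal_cone C \<mu> \<longleftrightarrow> \<mu> \<in> C \<and> (\<forall>S\<in>C. \<mu> \<subseteq> S \<longrightarrow> S = \<mu>)"

text \<open>Toric divisors D_1..D_k have nonempty intersection iff their ray
  generators span a cone; a primitive set is thus a set of rays that is not a cone
  while all its proper subsets are cones.\<close>
definition primitive_set :: "(real^'n) set \<Rightarrow> (real^'n) set set \<Rightarrow> (real^'n) set \<Rightarrow> bool" where
  "primitive_set R C P \<longleftrightarrow> P \<subseteq> R \<and> P \<notin> C \<and> (\<forall>Q. Q \<subset> P \<longrightarrow> Q \<in> C)"

text \<open>Fano property of the toric subvariety X(sigma) (orbit closure), whose fan is
  Star(sigma) in N(sigma) = N / N_sigma. Its rays are the images of the rays rho with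
  sigma \<union> {rho} a cone (rho not in sigma), its maximal cones are the images of the
  maximal cones mu containing sigma. By the toric ampleness criterion, -K is ample iff
  the support function is strictly convex: for every maximal cone mu \<supseteq> sigma, the
  linear form m on N(sigma) (i.e. m on N vanishing on sigma) with m = 1 on the rays of
  mu outside sigma satisfies m(rho) < 1 for every other ray rho of Star(sigma).
  For sigma = {} this is the Fano property of X itself.\<close>
definition fano_orbit_closure :: "(real^'n) set \<Rightarrow> (real^'n) set set \<Rightarrow> (real^'n) set \<Rightarrow> bool" where
  "fano_orbit_closure R C \<sigma> \<longleftrightarrow>
     (\<forall>\<mu>. maximal_cone C \<mu> \<and> \<sigma> \<subseteq> \<mu> \<longrightarrow>
       (\<forall>m :: real^'n. (\<forall>r\<in>\<sigma>. m \<bullet> r = 0) \<and> (\<forall>r\<in>\<mu> - \<sigma>. m \<bullet> r = 1) \<longrightarrow>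
         (\<forall>\<rho>\<in>R. insert \<rho> \<sigma> \<in> C \<and> \<rho> \<notin> \<mu> \<longrightarrow> m \<bullet> \<rho> < 1)))"

definition fano_fan :: "(real^'n) set \<Rightarrow> (real^'n) set set \<Rightarrow> bool" where
  "fano_fan R C \<longleftrightarrow> fano_orbit_closure R C {}"

end

theory Submission
  imports Defs
begin

text \<open>A maximal cone \<open>\<mu>\<close> is a \<open>\<int>\<close>-basis of \<open>N\<close>, so every ray has integral coordinates in the
  basis \<open>\<mu>\<close>, and the Fano condition for \<open>X(\<sigma>)\<close> says that for every ray \<open>\<rho> \<notin> \<mu>\<close> adjacent to
  \<open>\<sigma> \<subseteq> \<mu>\<close> the coordinates of \<open>\<rho>\<close> outside \<open>\<sigma>\<close> sum to at most \<open>0\<close>. Such a ray always has a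
  negative coordinate outside \<open>\<sigma>\<close>: otherwise \<open>\<rho>\<close> plus a nonnegative combination of \<open>\<sigma>\<close> would
  lie in the two cones \<open>\<mu>\<close> and \<open>\<sigma> \<union> {\<rho>}\<close>, which meet in \<open>\<sigma>\<close>. With the bounds of (iii) this
  gives (i); and in a maximal cone entered from the relative interior of \<open>P - {x}\<close> it forces
  the coordinates of \<open>x\<close> on \<open>P - {x}\<close> to be \<open>-1\<close>, so that \<open>\<Sum>P\<close> has nonnegative integral
  coordinates of sum at most \<open>1\<close>, which is (ii).

  Conversely, under (i) or (ii) the positive coordinates of a ray \<open>\<rho> \<notin> \<mu>\<close> sum to at most \<open>1\<close>,
  by induction on the sum of its negative coordinates: a primitive relation among \<open>\<rho>\<close> and rays
  of \<open>\<mu>\<close> on which \<open>\<rho>\<close> is negative (for (ii)), or the Fano condition on a face adjacent to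
  \<open>\<rho>\<close> (for (i)), replaces \<open>\<rho>\<close> by \<open>0\<close> or by a ray whose coordinates (outside that face) are those of
  \<open>\<rho>\<close> raised by \<open>1\<close> at some negative places. The lower bound \<open>-1\<close> of (iii) then follows by crossing the
  wall of \<open>\<mu>\<close> opposite to a generator \<open>s\<close>, which negates the \<open>s\<close>-coordinate.\<close>

section \<open>Coordinates and positive cones\<close>

lemma representation_sum_scaleR:
  fixes S :: "'a::real_vector set"
  assumes "independent S" "T \<subseteq> S" "finite T"
  shows "representation S (\<Sum>t\<in>T. c t *\<^sub>R t) = (\<lambda>s. if s \<in> T then c s else 0)"
proof -
  have "representation S (\<Sum>t\<in>T. c t *\<^sub>R t) = (\<lambda>s. \<Sum>t\<in>T. c t * (if s = t then 1 else 0))"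
    using assms by (auto simp: representation_sum representation_scale representation_basis
        span_base span_scale subset_iff)
  also have "\<dots> = (\<lambda>s. if s \<in> T then c s else 0)"
    using assms(3) by (auto simp: if_distrib[of "(*) _"] cong: if_cong)
  finally show ?thesis .
qed

lemma representation_eq_zero_outside:
  fixes S :: "'a::real_vector set"
  assumes "independent S" "\<sigma> \<subseteq> S" "v \<in> span \<sigma>" "s \<notin> \<sigma>"
  shows "representation S v s = 0"
  using representation_extend[OF assms(1,3,2)] representation_ne_zero assms(4) by metis

lemma in_span_if_representation_eq_zero:
  fixes S :: "'a::real_vector set"
  assumes "independent S" "v \<in> span S" "\<And>t. t \<notin> \<sigma> \<Longrightarrow> representation S v t = 0"
  shows "v \<in> span \<sigma>"
proof -
  have "{b. representation S v b \<noteq> 0} \<subseteq> \<sigma>" using assms(3) by blast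
  then have "(\<Sum>b | representation S v b \<noteq> 0. representation S v b *\<^sub>R b) \<in> span \<sigma>"
    by (intro span_sum) (auto intro: span_scale span_base)
  then show ?thesis using sum_nonzero_representation_eq[OF assms(1,2)] by simp
qed

lemma span_if_two_points_on_line:
  fixes x v :: "'a::real_vector"
  assumes "x + a *\<^sub>R v \<in> span T" "x + b *\<^sub>R v \<in> span T" "a \<noteq> b"
  shows "v \<in> span T" "x \<in> span T"
proof -
  have "(a - b) *\<^sub>R v \<in> span T"
    using span_diff[OF assms(1,2)] by (simp add: scaleR_diff_left)
  from span_scale[OF this, of "inverse (a - b)"]
  show v: "v \<in> span T" using assms(3) by simp
  show "x \<in> span T"
    using span_diff[OF assms(1) span_scale[OF v, of a]] by simp
qed

lemma pos_cone_subset_span: "pos_cone S \<subseteq> span S"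
  unfolding pos_cone_def by (auto intro: span_sum span_scale span_base)

lemma pos_cone_mono:
  assumes "finite T" "S \<subseteq> T"
  shows "pos_cone S \<subseteq> pos_cone T"
proof
  fix x assume "x \<in> pos_cone S"
  then obtain c where c: "\<forall>s\<in>S. c s \<ge> 0" "x = (\<Sum>s\<in>S. c s *\<^sub>R s)"
    unfolding pos_cone_def by auto
  have "(\<Sum>s\<in>T. (if s \<in> S then c s else 0) *\<^sub>R s) = (\<Sum>s\<in>S. c s *\<^sub>R s)"
    by (rule sum.mono_neutral_cong_right) (use assms in auto)
  then show "x \<in> pos_cone T"
    unfolding pos_cone_def using c by (intro CollectI exI[of _ "\<lambda>s. if s \<in> S then c s else 0"]) auto
qed

lemma pos_cone_iff_representation:
  fixes S :: "(real^'n) set"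
  assumes "finite S" "independent S"
  shows "v \<in> pos_cone S \<longleftrightarrow> v \<in> span S \<and> (\<forall>s\<in>S. 0 \<le> representation S v s)"
proof
  assume "v \<in> pos_cone S"
  then obtain c where "\<forall>s\<in>S. c s \<ge> 0" "v = (\<Sum>s\<in>S. c s *\<^sub>R s)"
    unfolding pos_cone_def by auto
  then show "v \<in> span S \<and> (\<forall>s\<in>S. 0 \<le> representation S v s)"
    using representation_sum_scaleR[OF assms(2) order_refl assms(1)] \<open>v \<in> pos_cone S\<close>
      pos_cone_subset_span by auto
next
  assume "v \<in> span S \<and> (\<forall>s\<in>S. 0 \<le> representation S v s)"
  then show "v \<in> pos_cone S"
    unfolding pos_cone_def using sum_representation_eq[OF assms(2) _ assms(1) order_refl]
    by (auto intro!: exI[of _ "representation S v"])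
qed

lemma nonneg_if_small_perturbations_nonneg:
  fixes a b :: real
  assumes "\<And>\<epsilon>. \<epsilon> > 0 \<Longrightarrow> \<exists>e. 0 < e \<and> e < \<epsilon> \<and> 0 \<le> a + e * b"
  shows "0 \<le> a"
proof (rule ccontr)
  assume "\<not> 0 \<le> a"
  then have "0 < - a / (\<bar>b\<bar> + 1)" by (intro divide_pos_pos) auto
  then obtain e where e: "0 < e" "e < - a / (\<bar>b\<bar> + 1)" "0 \<le> a + e * b"
    using assms by blast
  have "e * (\<bar>b\<bar> + 1) < - a"
    using e(2) pos_less_divide_eq[of "\<bar>b\<bar> + 1" e "- a"] by linarith
  moreover have "e * b \<le> e * \<bar>b\<bar>" using e(1) by (simp add: mult_left_mono)
  ultimately show False using e by (simp add: algebra_simps)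
qed

lemma Ints_mult_eq_1:
  fixes a b :: real
  assumes "a \<in> \<int>" "b \<in> \<int>" "a * b = 1"
  shows "b = 1 \<or> b = -1"
proof -
  obtain i j where ij: "a = of_int i" "b = of_int j" using assms(1,2) Ints_cases by metis
  then have "i * j = 1" using assms(3) by (metis of_int_eq_1_iff of_int_mult)
  then show ?thesis using ij zmult_eq_1_iff by auto
qed

lemma Ints_less_imp_le_diff_1:
  fixes x y :: real
  assumes "x \<in> \<int>" "y \<in> \<int>" "x < y"
  shows "x \<le> y - 1"
  using assms by (elim Ints_cases) (simp add: of_int_diff[symmetric] del: of_int_diff)

lemma Ints_sum_le_1:
  fixes f :: "'a \<Rightarrow> real"
  assumes "finite A" "\<And>t. t \<in> A \<Longrightarrow> f t \<in> \<int>" "\<And>t. t \<in> A \<Longrightarrow> f t \<le> 1"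
    and "card {t\<in>A. f t = 1} \<le> 1"
  shows "sum f A \<le> 1"
proof -
  have "sum f A \<le> (\<Sum>t\<in>A. if f t = 1 then 1 else 0)"
    by (rule sum_mono) (use assms(2,3) in \<open>fastforce elim!: Ints_cases\<close>)
  also have "\<dots> = card {t\<in>A. f t = 1}"
    using assms(1) by (simp add: sum.inter_filter[symmetric])
  finally show ?thesis using assms(4) by linarith
qed

lemma Ints_nonneg_sum_le_1:
  fixes f :: "'a \<Rightarrow> real"
  assumes "finite A" "\<And>t. t \<in> A \<Longrightarrow> f t \<in> \<int>" "\<And>t. t \<in> A \<Longrightarrow> 0 \<le> f t" "sum f A \<le> 1"
  shows "(\<forall>t\<in>A. f t = 0) \<or> (\<exists>r\<in>A. f r = 1 \<and> (\<forall>t\<in>A - {r}. f t = 0))"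
proof (cases "\<forall>t\<in>A. f t = 0")
  case False
  then obtain r where r: "r \<in> A" "f r \<noteq> 0" by blast
  then have "1 \<le> f r" using assms(2,3)[OF r(1)] by (auto elim!: Ints_cases)
  moreover have "sum f A = f r + sum f (A - {r})" using sum.remove[OF assms(1) r(1)] .
  moreover have "0 \<le> sum f (A - {r})" by (intro sum_nonneg) (use assms(3) in auto)
  ultimately have "f r = 1" "sum f (A - {r}) = 0" using assms(4) by linarith+
  then show ?thesis using sum_nonneg_eq_0_iff[of "A - {r}" f] assms(1,3) r(1) by auto
qed simp

lemma nonneg_real_measure_induct:
  fixes f :: "'a \<Rightarrow> real"
  assumes "\<And>x. 0 \<le> f x" and "\<And>x. (\<And>y. f y \<le> f x - 1 \<Longrightarrow> P y) \<Longrightarrow> P x"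
  shows "P x"
proof (induction x rule: measure_induct_rule[where f = "\<lambda>x. nat \<lceil>f x\<rceil>"])
  case (less x)
  show ?case
  proof (rule assms(2))
    fix y assume "f y \<le> f x - 1"
    then have "\<lceil>f y\<rceil> \<le> \<lceil>f x\<rceil> - 1" by (metis ceiling_diff_one ceiling_mono)
    moreover have "0 \<le> \<lceil>f y\<rceil>" using assms(1)[of y] by simp
    ultimately have "nat \<lceil>f y\<rceil> < nat \<lceil>f x\<rceil>" by linarith
    then show "P y" using less by blast
  qed
qed

section \<open>Positive and negative parts of coordinates\<close>

definition pos_part_sum :: "'a::real_vector set \<Rightarrow> 'a set \<Rightarrow> 'a \<Rightarrow> real" where
  "pos_part_sum \<mu> \<sigma> v = (\<Sum>s\<in>\<mu> - \<sigma>. max (representation \<mu> v s) 0)"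

definition neg_part_sum :: "'a::real_vector set \<Rightarrow> 'a set \<Rightarrow> 'a \<Rightarrow> real" where
  "neg_part_sum \<mu> \<sigma> v = (\<Sum>s\<in>\<mu> - \<sigma>. max (- representation \<mu> v s) 0)"

lemma neg_part_sum_nonneg: "0 \<le> neg_part_sum \<mu> \<sigma> v"
  unfolding neg_part_sum_def by (rule sum_nonneg) simp

lemma pos_part_sum_basis_le_1:
  assumes "independent \<mu>" "finite \<mu>" "r \<in> \<mu>"
  shows "pos_part_sum \<mu> \<sigma> r \<le> 1"
proof -
  have "pos_part_sum \<mu> \<sigma> r = (\<Sum>s\<in>\<mu> - \<sigma>. if s = r then 1 else 0)"
    unfolding pos_part_sum_def by (rule sum.cong) (auto simp: representation_basis assms)
  then show ?thesis using assms(2) by simp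
qed

lemma pos_part_sum_eq_0_if_in_span:
  assumes "independent \<mu>" "\<sigma> \<subseteq> \<mu>" "v \<in> span \<sigma>"
  shows "pos_part_sum \<mu> \<sigma> v = 0"
  unfolding pos_part_sum_def using representation_eq_zero_outside[OF assms] by (intro sum.neutral) auto

lemma pos_part_sum_le_1D:
  assumes "finite (\<mu> - \<sigma>)" "pos_part_sum \<mu> \<sigma> v \<le> 1"
  shows "\<forall>s\<in>\<mu> - \<sigma>. representation \<mu> v s \<le> 1" "card {s\<in>\<mu> - \<sigma>. representation \<mu> v s = 1} \<le> 1"
proof -
  show "\<forall>s\<in>\<mu> - \<sigma>. representation \<mu> v s \<le> 1"
  proof
    fix s assume "s \<in> \<mu> - \<sigma>"
    then have "max (representation \<mu> v s) 0 \<le> pos_part_sum \<mu> \<sigma> v"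
      unfolding pos_part_sum_def by (rule member_le_sum) (simp_all add: assms(1))
    then show "representation \<mu> v s \<le> 1" using assms(2) by linarith
  qed
  let ?ones = "{s\<in>\<mu> - \<sigma>. representation \<mu> v s = 1}"
  have "(\<Sum>s\<in>?ones. max (representation \<mu> v s) 0) = (\<Sum>s\<in>?ones. 1)"
    by (rule sum.cong) auto
  then have "card ?ones = (\<Sum>s\<in>?ones. max (representation \<mu> v s) 0)" by simp
  also have "\<dots> \<le> pos_part_sum \<mu> \<sigma> v"
    unfolding pos_part_sum_def by (rule sum_mono2) (use assms(1) in auto)
  finally show "card ?ones \<le> 1" using assms(2) by linarith
qed

lemma part_sums_shift:
  assumes "finite (\<mu> - \<sigma>)" "A \<subseteq> \<mu> - \<sigma>" "A \<noteq> {}" "\<And>t. t \<in> A \<Longrightarrow> representation \<mu> u t \<le> -1"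
    and shift: "\<And>t. t \<in> \<mu> - \<sigma> \<Longrightarrow> representation \<mu> v t = representation \<mu> u t + (if t \<in> A then 1 else 0)"
  shows "pos_part_sum \<mu> \<sigma> u \<le> pos_part_sum \<mu> \<sigma> v" "neg_part_sum \<mu> \<sigma> v \<le> neg_part_sum \<mu> \<sigma> u - 1"
proof -
  show "pos_part_sum \<mu> \<sigma> u \<le> pos_part_sum \<mu> \<sigma> v"
    unfolding pos_part_sum_def by (rule sum_mono, rule max.mono) (simp_all add: shift)
  have "neg_part_sum \<mu> \<sigma> v = (\<Sum>t\<in>\<mu> - \<sigma>. max (- representation \<mu> u t) 0 - (if t \<in> A then 1 else 0))"
    unfolding neg_part_sum_def
  proof (rule sum.cong[OF refl])
    fix t assume "t \<in> \<mu> - \<sigma>"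
    then show "max (- representation \<mu> v t) 0 = max (- representation \<mu> u t) 0 - (if t \<in> A then 1 else 0)"
      using assms(4)[of t] shift[of t] by (cases "t \<in> A") auto
  qed
  also have "\<dots> = neg_part_sum \<mu> \<sigma> u - card A"
  proof -
    have "(\<Sum>t\<in>\<mu> - \<sigma>. if t \<in> A then 1 else 0 :: real) = (\<Sum>t\<in>A. 1)"
      by (rule sum.mono_neutral_cong_right) (use assms(1,2) in auto)
    then show ?thesis unfolding neg_part_sum_def by (simp add: sum_subtractf)
  qed
  also have "\<dots> \<le> neg_part_sum \<mu> \<sigma> u - 1"
    using assms(1-3) finite_subset card_0_eq[of A] by fastforce
  finally show "neg_part_sum \<mu> \<sigma> v \<le> neg_part_sum \<mu> \<sigma> u - 1" .
qed

section \<open>Complete nonsingular fans\<close>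

locale toric_fan =
  fixes R :: "(real^'n) set" and C :: "(real^'n) set set"
  assumes complete_nonsingular: "complete_nonsingular_fan R C"
begin

lemma
  shows finite_rays: "finite R"
    and cones_subset_Pow: "C \<subseteq> Pow R"
    and empty_cone: "{} \<in> C"
    and face_cone: "S \<in> C \<Longrightarrow> T \<subseteq> S \<Longrightarrow> T \<in> C"
    and ray_cone: "\<rho> \<in> R \<Longrightarrow> {\<rho>} \<in> C"
    and cone_in_zbasis: "S \<in> C \<Longrightarrow> \<exists>B. S \<subseteq> B \<and> zbasis B"
    and pos_cone_Int: "S \<in> C \<Longrightarrow> T \<in> C \<Longrightarrow> pos_cone S \<inter> pos_cone T = pos_cone (S \<inter> T)"
    and cones_cover: "(\<Union>S\<in>C. pos_cone S) = UNIV"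
  using complete_nonsingular unfolding complete_nonsingular_fan_def by simp_all

lemma cone_subset_rays: "S \<in> C \<Longrightarrow> S \<subseteq> R"
  using cones_subset_Pow by blast

lemma cone_containing_point: "\<exists>T\<in>C. x \<in> pos_cone T"
proof -
  have "x \<in> (\<Union>S\<in>C. pos_cone S)" using cones_cover by simp
  then show ?thesis by blast
qed

lemma finite_cones: "finite C"
  using finite_subset[OF cones_subset_Pow] finite_rays by simp

lemma finite_cone: "S \<in> C \<Longrightarrow> finite S"
  using cone_subset_rays finite_rays finite_subset by blast

lemma independent_cone: "S \<in> C \<Longrightarrow> independent S"
  using cone_in_zbasis independent_mono unfolding zbasis_def by blast

lemma integral_ray: "\<rho> \<in> R \<Longrightarrow> integral_vec \<rho>"
  using cone_in_zbasis[OF ray_cone] unfolding zbasis_def by blast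

lemma representation_eq_zero_outside_common_face:
  assumes "S \<in> C" "T \<in> C" "v \<in> pos_cone S" "v \<in> pos_cone T" "s \<notin> T"
  shows "representation S v s = 0"
proof -
  have "v \<in> span (S \<inter> T)"
    using pos_cone_Int[OF assms(1,2)] assms(3,4) pos_cone_subset_span by blast
  then show ?thesis
    by (rule representation_eq_zero_outside[OF independent_cone[OF assms(1)] Int_lower1])
      (use assms(5) in blast)
qed

lemma cone_subset_if_sum_in_pos_cone:
  assumes "\<sigma> \<in> C" "T \<in> C" "\<Sum>\<sigma> \<in> pos_cone T"
  shows "\<sigma> \<subseteq> T"
proof
  fix s assume "s \<in> \<sigma>"
  have "\<Sum>\<sigma> = (\<Sum>t\<in>\<sigma>. 1 *\<^sub>R t)" by simp
  then have in_\<sigma>: "\<Sum>\<sigma> \<in> pos_cone \<sigma>" unfolding pos_cone_def by (auto intro!: exI[of _ "\<lambda>_. 1"])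
  have one: "representation \<sigma> (\<Sum>\<sigma>) s = 1"
    using representation_sum_scaleR[OF independent_cone[OF assms(1)] order_refl finite_cone[OF assms(1)],
        of "\<lambda>_. 1"] \<open>s \<in> \<sigma>\<close> by simp
  show "s \<in> T"
  proof (rule ccontr)
    assume "s \<notin> T"
    from representation_eq_zero_outside_common_face[OF assms(1,2) in_\<sigma> assms(3) this]
    show False using one by simp
  qed
qed

lemma maximal_cone_exists:
  assumes "S \<in> C"
  obtains \<mu> where "maximal_cone C \<mu>" "S \<subseteq> \<mu>"
proof -
  obtain \<mu> where "\<mu> \<in> C" "S \<subseteq> \<mu>" "\<forall>T\<in>C. \<mu> \<subseteq> T \<longrightarrow> \<mu> = T"
    using finite_has_maximal2[OF finite_cones assms] by blast
  then show ?thesis using that unfolding maximal_cone_def by blast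
qed

text \<open>Infinitely many of the points \<open>x + v /\<^sub>R (k + 1)\<close> lie in one cone \<open>T\<close>, which then
  also contains their limit \<open>x\<close>.\<close>
lemma cone_containing_segment: "\<exists>T\<in>C. x \<in> pos_cone T \<and> (\<exists>e>0. x + e *\<^sub>R v \<in> pos_cone T)"
proof -
  define e where "e k = 1 / (real k + 1)" for k :: nat
  have "\<forall>k. \<exists>T. T \<in> C \<and> x + e k *\<^sub>R v \<in> pos_cone T" using cone_containing_point by blast
  then obtain f where f: "\<And>k. f k \<in> C \<and> x + e k *\<^sub>R v \<in> pos_cone (f k)" by metis
  have "range f \<subseteq> C" using f by blast
  then have "finite (range f)" using finite_cones finite_subset by blast
  then obtain T where "infinite (f -` {T})"
    using inf_img_fin_domE[OF _ infinite_UNIV_nat] by blast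
  then have unbounded: "\<forall>m. \<exists>k>m. f k = T" unfolding infinite_nat_iff_unbounded by simp
  then obtain k1 where k1: "f k1 = T" by blast
  obtain k2 where k2: "f k2 = T" "k1 < k2" using unbounded by blast
  have "T \<in> C" using f[of k1] k1 by simp
  then have T: "T \<in> C" "finite T" "independent T" using finite_cone independent_cone by auto
  have in_T: "f k = T \<Longrightarrow> x + e k *\<^sub>R v \<in> pos_cone T" for k using f by blast
  have "e k1 \<noteq> e k2" using k2(2) unfolding e_def by (simp add: divide_simps)
  moreover have "x + e k1 *\<^sub>R v \<in> span T" "x + e k2 *\<^sub>R v \<in> span T"
    using in_T k1 k2(1) pos_cone_subset_span by blast+
  ultimately have span_T: "x \<in> span T" "v \<in> span T"
    using span_if_two_points_on_line[of x "e k1" v T "e k2"] by blast+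
  have "0 \<le> representation T x s" if "s \<in> T" for s
  proof (rule nonneg_if_small_perturbations_nonneg)
    fix \<epsilon> :: real assume "\<epsilon> > 0"
    obtain m :: nat where m: "1 / \<epsilon> < m" using reals_Archimedean2 by blast
    obtain k where k: "f k = T" "m < k" using unbounded by blast
    have "1 / \<epsilon> < real k + 1" using m k(2) by linarith
    then have "0 < e k" "e k < \<epsilon>"
      using \<open>\<epsilon> > 0\<close> unfolding e_def by (simp_all add: divide_less_eq mult.commute)
    moreover have "0 \<le> representation T (x + e k *\<^sub>R v) s"
      using in_T[OF k(1)] pos_cone_iff_representation[OF T(2,3)] that by blast
    moreover have "representation T (x + e k *\<^sub>R v) s
        = representation T x s + e k * representation T v s"
      using span_T T(3) by (simp add: representation_add representation_scale span_scale)
    ultimately show "\<exists>e. 0 < e \<and> e < \<epsilon> \<and> 0 \<le> representation T x s + e * representation T v s"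
      by auto
  qed
  then have "x \<in> pos_cone T" using pos_cone_iff_representation[OF T(2,3)] span_T by blast
  moreover have "e k1 > 0" unfolding e_def by simp
  ultimately show ?thesis using T(1) in_T[OF k1] by blast
qed

lemma maximal_cone_in_cones: "maximal_cone C \<mu> \<Longrightarrow> \<mu> \<in> C"
  unfolding maximal_cone_def by blast

lemma maximal_coneD: "maximal_cone C \<mu> \<Longrightarrow> S \<in> C \<Longrightarrow> \<mu> \<subseteq> S \<Longrightarrow> S = \<mu>"
  unfolding maximal_cone_def by blast

lemma span_maximal_cone:
  assumes "maximal_cone C \<mu>"
  shows "span \<mu> = UNIV"
proof (rule ccontr)
  assume "span \<mu> \<noteq> UNIV"
  then obtain v where v: "v \<notin> span \<mu>" by blast
  obtain T e where T: "T \<in> C" "\<Sum>\<mu> \<in> pos_cone T" "e > 0" "\<Sum>\<mu> + e *\<^sub>R v \<in> pos_cone T"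
    using cone_containing_segment by blast
  have "T = \<mu>"
    using cone_subset_if_sum_in_pos_cone[OF maximal_cone_in_cones[OF assms] T(1,2)]
      maximal_coneD[OF assms T(1)] by blast
  then have "\<Sum>\<mu> + 0 *\<^sub>R v \<in> span \<mu>" "\<Sum>\<mu> + e *\<^sub>R v \<in> span \<mu>"
    using T(2,4) pos_cone_subset_span by auto
  then show False using span_if_two_points_on_line(1)[of "\<Sum>\<mu>" 0 v \<mu> e] v T(3) by simp
qed

lemma maximal_cone_basis:
  assumes "maximal_cone C \<mu>"
  shows "finite \<mu>" "independent \<mu>" "span \<mu> = UNIV"
  using assms finite_cone independent_cone maximal_cone_in_cones span_maximal_cone by auto

lemma card_maximal_cone: "maximal_cone C \<mu> \<Longrightarrow> card \<mu> = CARD('n)"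
  using dim_span_eq_card_independent[of \<mu>] maximal_cone_basis by simp

lemma zbasis_maximal_cone:
  assumes "maximal_cone C \<mu>"
  shows "zbasis \<mu>"
proof -
  obtain B where B: "\<mu> \<subseteq> B" "zbasis B"
    using cone_in_zbasis[OF maximal_cone_in_cones[OF assms]] by blast
  then have "\<mu> = B"
    using card_subset_eq[OF _ B(1)] card_maximal_cone[OF assms] unfolding zbasis_def by simp
  then show ?thesis using B(2) by simp
qed

lemma representation_maximal_cone:
  assumes "maximal_cone C \<mu>"
  shows "representation \<mu> (u + w) t = representation \<mu> u t + representation \<mu> w t"
    and "representation \<mu> (u - w) t = representation \<mu> u t - representation \<mu> w t"
    and "representation \<mu> (- u) t = - representation \<mu> u t"
    and "representation \<mu> (a *\<^sub>R u) t = a * representation \<mu> u t"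
    and "representation \<mu> (\<Sum>i\<in>I. g i) t = (\<Sum>i\<in>I. representation \<mu> (g i) t)"
    and "u \<in> \<mu> \<Longrightarrow> representation \<mu> u t = (if t = u then 1 else 0)"
  using maximal_cone_basis[OF assms]
  by (simp_all add: representation_add representation_diff representation_neg representation_scale
      representation_sum representation_basis)

lemma sum_representation_maximal_cone:
  "maximal_cone C \<mu> \<Longrightarrow> (\<Sum>s\<in>\<mu>. representation \<mu> w s *\<^sub>R s) = w"
  using maximal_cone_basis by (simp add: sum_representation_eq)

lemma representation_maximal_cone_Ints:
  assumes "maximal_cone C \<mu>" "integral_vec v"
  shows "representation \<mu> v s \<in> \<int>"
proof -
  obtain c :: "real^'n \<Rightarrow> int" where "v = (\<Sum>b\<in>\<mu>. of_int (c b) *\<^sub>R b)"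
    using zbasis_maximal_cone[OF assms(1)] assms(2) unfolding zbasis_def by blast
  then show ?thesis using maximal_cone_basis[OF assms(1)] by (simp add: representation_sum_scaleR)
qed

lemma ray_representation_Ints: "maximal_cone C \<mu> \<Longrightarrow> \<rho> \<in> R \<Longrightarrow> representation \<mu> \<rho> s \<in> \<int>"
  using representation_maximal_cone_Ints integral_ray by blast

lemma in_span_if_coordinates_vanish:
  assumes "maximal_cone C \<mu>" "\<And>t. t \<in> \<mu> - \<sigma> \<Longrightarrow> representation \<mu> v t = 0"
  shows "v \<in> span \<sigma>"
  using in_span_if_representation_eq_zero[of \<mu> v \<sigma>] maximal_cone_basis[OF assms(1)] assms(2)
    representation_ne_zero by blast

lemma coordinate_outside_face_eq_zero:
  assumes "maximal_cone C \<mu>" "\<sigma> \<subseteq> \<mu>" "v \<in> span \<sigma>" "t \<notin> \<sigma>"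
  shows "representation \<mu> v t = 0"
  using representation_eq_zero_outside[OF maximal_cone_basis(2)[OF assms(1)] assms(2-4)] .

lemma maximal_cone_entered_from_face:
  assumes "\<sigma> \<in> C"
  obtains \<mu> where "maximal_cone C \<mu>" "\<sigma> \<subseteq> \<mu>" "\<And>t. t \<in> \<mu> - \<sigma> \<Longrightarrow> 0 \<le> representation \<mu> v t"
proof -
  obtain T e where T: "T \<in> C" "\<Sum>\<sigma> \<in> pos_cone T" "e > 0" "\<Sum>\<sigma> + e *\<^sub>R v \<in> pos_cone T"
    using cone_containing_segment by blast
  obtain \<mu> where \<mu>: "maximal_cone C \<mu>" "T \<subseteq> \<mu>" using maximal_cone_exists[OF T(1)] by blast
  have \<sigma>\<mu>: "\<sigma> \<subseteq> \<mu>" using cone_subset_if_sum_in_pos_cone[OF assms T(1,2)] \<mu>(2) by blast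
  have "0 \<le> representation \<mu> v t" if t: "t \<in> \<mu> - \<sigma>" for t
  proof -
    have "\<Sum>\<sigma> + e *\<^sub>R v \<in> pos_cone \<mu>"
      using pos_cone_mono[OF maximal_cone_basis(1)[OF \<mu>(1)] \<mu>(2)] T(4) by blast
    then have "0 \<le> representation \<mu> (\<Sum>\<sigma> + e *\<^sub>R v) t"
      using pos_cone_iff_representation maximal_cone_basis[OF \<mu>(1)] t by blast
    moreover have "representation \<mu> (\<Sum>\<sigma>) t = 0"
      using coordinate_outside_face_eq_zero[OF \<mu>(1) \<sigma>\<mu>] t by (simp add: span_sum span_base)
    ultimately have "0 \<le> e * representation \<mu> v t" by (simp add: representation_maximal_cone \<mu>(1))
    then show ?thesis using T(3) by (simp add: zero_le_mult_iff)
  qed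
  then show ?thesis using that \<mu>(1) \<sigma>\<mu> by blast
qed

lemma span_cases_if_coordinate_sum_le_1:
  assumes \<mu>: "maximal_cone C \<mu>" and Ints: "\<And>t. representation \<mu> v t \<in> \<int>"
    and nonneg: "\<And>t. t \<in> \<mu> - \<sigma> \<Longrightarrow> 0 \<le> representation \<mu> v t"
    and le_1: "(\<Sum>t\<in>\<mu> - \<sigma>. representation \<mu> v t) \<le> 1"
  shows "v \<in> span \<sigma> \<or> (\<exists>r\<in>\<mu> - \<sigma>. v - r \<in> span \<sigma>)"
proof -
  have fin: "finite (\<mu> - \<sigma>)" using maximal_cone_basis(1)[OF \<mu>] by simp
  from Ints_nonneg_sum_le_1[OF fin Ints nonneg le_1]
  consider "\<forall>t\<in>\<mu> - \<sigma>. representation \<mu> v t = 0"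
    | r where "r \<in> \<mu> - \<sigma>" "representation \<mu> v r = 1" "\<forall>t\<in>\<mu> - \<sigma> - {r}. representation \<mu> v t = 0"
    by blast
  then show ?thesis
  proof cases
    case 1
    then show ?thesis using in_span_if_coordinates_vanish[OF \<mu>] by blast
  next
    case 2
    have "v - r \<in> span \<sigma>"
    proof (rule in_span_if_coordinates_vanish[OF \<mu>])
      fix t assume "t \<in> \<mu> - \<sigma>"
      then show "representation \<mu> (v - r) t = 0"
        using 2 by (cases "t = r") (auto simp: representation_maximal_cone \<mu>)
    qed
    then show ?thesis using 2(1) by blast
  qed
qed

lemma ray_outside_maximal_cone_has_negative_coordinate:
  assumes \<mu>: "maximal_cone C \<mu>" and "\<sigma> \<subseteq> \<mu>" "insert \<rho> \<sigma> \<in> C" "\<rho> \<notin> \<mu>"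
  shows "\<exists>t\<in>\<mu> - \<sigma>. representation \<mu> \<rho> t < 0"
proof (rule ccontr)
  assume "\<not> ?thesis"
  then have nonneg: "0 \<le> representation \<mu> \<rho> t" if "t \<in> \<mu> - \<sigma>" for t
    using that by (simp add: not_less)
  define d where "d t = max (- representation \<mu> \<rho> t) 0" for t
  define z where "z = \<rho> + (\<Sum>t\<in>\<sigma>. d t *\<^sub>R t)"
  have fin_\<sigma>: "finite \<sigma>" and \<rho>\<sigma>: "\<rho> \<notin> \<sigma>"
    using finite_cone[OF assms(3)] assms(2,4) by auto
  have "z = (\<Sum>u\<in>insert \<rho> \<sigma>. (if u = \<rho> then 1 else d u) *\<^sub>R u)"
    unfolding z_def using \<rho>\<sigma> by (auto simp: sum.insert[OF fin_\<sigma> \<rho>\<sigma>] intro!: sum.cong)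
  then have "z \<in> pos_cone (insert \<rho> \<sigma>)"
    unfolding pos_cone_def by (intro CollectI exI[of _ "\<lambda>u. if u = \<rho> then 1 else d u"]) (simp add: d_def)
  moreover have "z \<in> pos_cone \<mu>"
  proof -
    have "representation \<mu> z t = representation \<mu> \<rho> t + (if t \<in> \<sigma> then d t else 0)" for t
      unfolding z_def using representation_sum_scaleR[OF maximal_cone_basis(2)[OF \<mu>] assms(2) fin_\<sigma>]
      by (simp add: representation_maximal_cone \<mu>)
    then have "\<forall>t\<in>\<mu>. 0 \<le> representation \<mu> z t" using nonneg unfolding d_def by auto
    then show ?thesis using pos_cone_iff_representation maximal_cone_basis[OF \<mu>] by blast
  qed
  ultimately have "z \<in> pos_cone (\<mu> \<inter> insert \<rho> \<sigma>)"
    using pos_cone_Int[OF maximal_cone_in_cones[OF \<mu>] assms(3)] by blast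
  moreover have "\<mu> \<inter> insert \<rho> \<sigma> = \<sigma>" using assms(2,4) by blast
  ultimately have "z \<in> pos_cone \<sigma>" by simp
  then have "z - (\<Sum>t\<in>\<sigma>. d t *\<^sub>R t) \<in> span \<sigma>"
    using pos_cone_subset_span by (blast intro: span_diff span_sum span_scale span_base)
  then have "\<rho> \<in> span \<sigma>" unfolding z_def by simp
  then show False using independent_cone[OF assms(3)] \<rho>\<sigma> by (simp add: independent_insert)
qed

lemma representation_after_exchange:
  assumes \<mu>: "maximal_cone C \<mu>" and \<mu>': "maximal_cone C \<mu>'"
    and "s \<in> \<mu>" "\<mu> - {s} \<subseteq> \<mu>'" "s' \<in> \<mu>'" "s' \<notin> \<mu> - {s}"
  shows "representation \<mu>' v s' = representation \<mu> v s * representation \<mu>' s s'"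
proof -
  have "representation \<mu>' v s' = representation \<mu>' (\<Sum>t\<in>\<mu>. representation \<mu> v t *\<^sub>R t) s'"
    by (simp only: sum_representation_maximal_cone[OF \<mu>])
  also have "\<dots> = (\<Sum>t\<in>\<mu>. representation \<mu> v t * representation \<mu>' t s')"
    by (simp add: representation_maximal_cone \<mu>')
  also have "\<dots> = representation \<mu> v s * representation \<mu>' s s'
      + (\<Sum>t\<in>\<mu> - {s}. representation \<mu> v t * representation \<mu>' t s')"
    using sum.remove[OF maximal_cone_basis(1)[OF \<mu>] assms(3)] by simp
  also have "(\<Sum>t\<in>\<mu> - {s}. representation \<mu> v t * representation \<mu>' t s') = 0"
  proof (intro sum.neutral ballI)
    fix t assume "t \<in> \<mu> - {s}"
    then have "t \<in> \<mu>'" "t \<noteq> s'" using assms(4,6) by auto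
    then show "representation \<mu> v t * representation \<mu>' t s' = 0"
      by (simp add: representation_maximal_cone \<mu>')
  qed
  finally show ?thesis by simp
qed

text \<open>The maximal cone entered from the facet \<open>\<mu> - {s}\<close> in the direction \<open>-s\<close>. Its new
  coordinate is an integral multiple \<open>\<gamma>\<close> of the \<open>s\<close>-coordinate; \<open>\<gamma>\<close> is a unit because the new
  generator is integral too, and \<open>\<gamma> = -1\<close> because \<open>-s\<close> points into the new cone.\<close>
lemma wall_crossing:
  assumes \<mu>: "maximal_cone C \<mu>" and s: "s \<in> \<mu>"
  obtains s' where "maximal_cone C (insert s' (\<mu> - {s}))" "s' \<notin> \<mu>"
    "\<And>v. representation (insert s' (\<mu> - {s})) v s' = - representation \<mu> v s"
proof -
  have "\<mu> - {s} \<in> C" using face_cone maximal_cone_in_cones[OF \<mu>] by blast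
  then obtain \<mu>' where \<mu>': "maximal_cone C \<mu>'" "\<mu> - {s} \<subseteq> \<mu>'"
    and nonneg: "\<And>t. t \<in> \<mu>' - (\<mu> - {s}) \<Longrightarrow> 0 \<le> representation \<mu>' (- s) t"
    using maximal_cone_entered_from_face by blast
  have "s \<notin> \<mu>'"
  proof
    assume "s \<in> \<mu>'"
    then have "\<mu>' = \<mu>" using maximal_coneD[OF \<mu> maximal_cone_in_cones[OF \<mu>'(1)]] \<mu>'(2) by blast
    then show False using nonneg[of s] s by (simp add: representation_maximal_cone \<mu>)
  qed
  have "card (\<mu> - {s}) = CARD('n) - 1"
    using card_maximal_cone[OF \<mu>] maximal_cone_basis(1)[OF \<mu>] s by simp
  then have "card (\<mu>' - (\<mu> - {s})) = 1"
    using card_Diff_subset[OF finite_subset[OF \<mu>'(2) maximal_cone_basis(1)[OF \<mu>'(1)]] \<mu>'(2)]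
      card_maximal_cone[OF \<mu>'(1)] zero_less_card_finite[where 'a='n] by simp
  then obtain s' where s': "\<mu>' - (\<mu> - {s}) = {s'}" using card_1_singletonE by blast
  then have \<mu>'_eq: "\<mu>' = insert s' (\<mu> - {s})" and "s' \<notin> \<mu>"
    using \<mu>'(2) \<open>s \<notin> \<mu>'\<close> by blast+
  define \<gamma> where "\<gamma> = representation \<mu>' s s'"
  have exchange: "representation \<mu>' v s' = representation \<mu> v s * \<gamma>" for v
    using representation_after_exchange[OF \<mu> \<mu>'(1) s \<mu>'(2)] s' unfolding \<gamma>_def by blast
  have "s \<in> R" "s' \<in> R"
    using cone_subset_rays maximal_cone_in_cones \<mu> \<mu>'(1) s s' by blast+
  moreover have "representation \<mu> s' s * \<gamma> = 1"
    using exchange[of s'] representation_maximal_cone(6)[OF \<mu>'(1), of s' s'] \<mu>'_eq by simp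
  ultimately have "\<gamma> = 1 \<or> \<gamma> = -1"
    using Ints_mult_eq_1 ray_representation_Ints[OF \<mu>] ray_representation_Ints[OF \<mu>'(1)]
    unfolding \<gamma>_def by blast
  moreover have "0 \<le> - \<gamma>"
    using nonneg[of s'] exchange[of "- s"] s' s by (simp add: representation_maximal_cone \<mu>)
  ultimately have "\<gamma> = -1" by linarith
  then show ?thesis using that \<mu>'(1) \<mu>'_eq \<open>s' \<notin> \<mu>\<close> exchange by simp
qed

lemma coordinate_lower_bound_of_upper_bound:
  assumes up: "\<And>\<mu> \<rho> s. maximal_cone C \<mu> \<Longrightarrow> \<rho> \<in> R - \<mu> \<Longrightarrow> s \<in> \<mu> \<Longrightarrow> representation \<mu> \<rho> s \<le> 1"
    and \<mu>: "maximal_cone C \<mu>" and \<rho>: "\<rho> \<in> R - \<mu>" and s: "s \<in> \<mu>"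
  shows "-1 \<le> representation \<mu> \<rho> s"
proof (rule ccontr)
  assume "\<not> -1 \<le> representation \<mu> \<rho> s"
  obtain s' where wall: "maximal_cone C (insert s' (\<mu> - {s}))" "s' \<notin> \<mu>"
    "\<And>v. representation (insert s' (\<mu> - {s})) v s' = - representation \<mu> v s"
    using wall_crossing[OF \<mu> s] by blast
  then have gt: "1 < representation (insert s' (\<mu> - {s})) \<rho> s'"
    using \<open>\<not> -1 \<le> representation \<mu> \<rho> s\<close> by simp
  show False
  proof (cases "\<rho> = s'")
    case True
    then show False using gt by (simp add: representation_maximal_cone wall(1))
  next
    case False
    then have "\<rho> \<in> R - insert s' (\<mu> - {s})" using \<rho> by auto
    then show False using up[OF wall(1) _ insertI1, of \<rho>] gt by simp
  qed
qed

section \<open>The Fano condition in coordinates\<close>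

text \<open>In the basis \<open>\<mu>\<close>, the linear form \<open>m\<close> of \<^const>\<open>fano_orbit_closure\<close> is the
  sum of the coordinates outside \<open>\<sigma>\<close>.\<close>
definition fano_coord :: "(real^'n) set \<Rightarrow> bool" where
  "fano_coord \<sigma> \<longleftrightarrow> (\<forall>\<mu>. maximal_cone C \<mu> \<and> \<sigma> \<subseteq> \<mu> \<longrightarrow>
     (\<forall>\<rho>\<in>R. insert \<rho> \<sigma> \<in> C \<and> \<rho> \<notin> \<mu> \<longrightarrow> (\<Sum>s\<in>\<mu> - \<sigma>. representation \<mu> \<rho> s) < 1))"

lemma coordinate_sum_functional:
  assumes "maximal_cone C \<mu>"
  obtains m where "\<And>v. m \<bullet> v = (\<Sum>s\<in>A. representation \<mu> v s)"
proof -
  define f where "f v = (\<Sum>s\<in>A. representation \<mu> v s)" for v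
  have "linear f" unfolding f_def
    by (rule linear_compose_sum)
      (use bounded_linear_representation maximal_cone_basis[OF assms] bounded_linear.linear in blast)
  then have "adjoint f 1 \<bullet> v = f v" for v
    using adjoint_works[of f v 1] by (simp add: inner_commute)
  then show ?thesis using that unfolding f_def by blast
qed

lemma inner_eq_coordinate_sum:
  assumes \<mu>: "maximal_cone C \<mu>" and "\<sigma> \<subseteq> \<mu>" "\<forall>r\<in>\<sigma>. m \<bullet> r = 0" "\<forall>r\<in>\<mu> - \<sigma>. m \<bullet> r = 1"
  shows "m \<bullet> v = (\<Sum>s\<in>\<mu> - \<sigma>. representation \<mu> v s)"
proof -
  have "m \<bullet> v = m \<bullet> (\<Sum>s\<in>\<mu>. representation \<mu> v s *\<^sub>R s)"
    by (simp only: sum_representation_maximal_cone[OF \<mu>])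
  also have "\<dots> = (\<Sum>s\<in>\<mu>. representation \<mu> v s * (m \<bullet> s))"
    by (simp add: inner_sum_right)
  also have "\<dots> = (\<Sum>s\<in>\<mu> - \<sigma>. representation \<mu> v s)"
    by (rule sum.mono_neutral_cong_right) (use assms maximal_cone_basis(1)[OF \<mu>] in auto)
  finally show ?thesis .
qed

lemma fano_orbit_closure_iff_fano_coord: "fano_orbit_closure R C \<sigma> \<longleftrightarrow> fano_coord \<sigma>"
proof
  assume fano: "fano_orbit_closure R C \<sigma>"
  show "fano_coord \<sigma>" unfolding fano_coord_def
  proof (intro allI impI ballI)
    fix \<mu> \<rho> assume \<mu>: "maximal_cone C \<mu> \<and> \<sigma> \<subseteq> \<mu>" and \<rho>: "\<rho> \<in> R" "insert \<rho> \<sigma> \<in> C \<and> \<rho> \<notin> \<mu>"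
    obtain m where m: "\<And>v. m \<bullet> v = (\<Sum>s\<in>\<mu> - \<sigma>. representation \<mu> v s)"
      using coordinate_sum_functional \<mu> by blast
    have "m \<bullet> r = (\<Sum>s\<in>\<mu> - \<sigma>. if s = r then 1 else 0)" if "r \<in> \<mu>" for r
      unfolding m using \<mu> that by (intro sum.cong) (auto simp: representation_maximal_cone)
    then have "\<forall>r\<in>\<sigma>. m \<bullet> r = 0" "\<forall>r\<in>\<mu> - \<sigma>. m \<bullet> r = 1"
      using \<mu> maximal_cone_basis(1) by auto
    then have "m \<bullet> \<rho> < 1" using fano \<mu> \<rho> unfolding fano_orbit_closure_def by blast
    then show "(\<Sum>s\<in>\<mu> - \<sigma>. representation \<mu> \<rho> s) < 1" unfolding m .
  qed
next
  assume fano: "fano_coord \<sigma>"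
  show "fano_orbit_closure R C \<sigma>" unfolding fano_orbit_closure_def
  proof (intro allI impI ballI)
    fix \<mu> m \<rho>
    assume \<mu>: "maximal_cone C \<mu> \<and> \<sigma> \<subseteq> \<mu>"
      and m: "(\<forall>r\<in>\<sigma>. m \<bullet> r = 0) \<and> (\<forall>r\<in>\<mu> - \<sigma>. m \<bullet> r = 1)"
      and \<rho>: "\<rho> \<in> R" "insert \<rho> \<sigma> \<in> C \<and> \<rho> \<notin> \<mu>"
    have "m \<bullet> \<rho> = (\<Sum>s\<in>\<mu> - \<sigma>. representation \<mu> \<rho> s)"
      using inner_eq_coordinate_sum \<mu> m by blast
    then show "m \<bullet> \<rho> < 1" using fano \<mu> \<rho> unfolding fano_coord_def by simp
  qed
qed

lemma fano_coord_coordinate_sum_le: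
  assumes "fano_coord \<sigma>" and \<mu>: "maximal_cone C \<mu>" and "\<sigma> \<subseteq> \<mu>" "r \<in> R - \<sigma>" "insert r \<sigma> \<in> C"
  shows "(\<Sum>s\<in>\<mu> - \<sigma>. representation \<mu> r s) \<le> (if r \<in> \<mu> then 1 else 0)"
proof (cases "r \<in> \<mu>")
  case True
  have "(\<Sum>s\<in>\<mu> - \<sigma>. representation \<mu> r s) = (\<Sum>s\<in>\<mu> - \<sigma>. if s = r then 1 else 0)"
    using True by (intro sum.cong) (auto simp: representation_maximal_cone \<mu>)
  then show ?thesis using True assms(4) maximal_cone_basis(1)[OF \<mu>] by simp
next
  case False
  then have "(\<Sum>s\<in>\<mu> - \<sigma>. representation \<mu> r s) < 1" using assms unfolding fano_coord_def by blast
  moreover have "(\<Sum>s\<in>\<mu> - \<sigma>. representation \<mu> r s) \<in> \<int>"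
    using ray_representation_Ints[OF \<mu>] assms(4) by (intro Ints_sum) blast
  ultimately show ?thesis using False Ints_less_imp_le_diff_1[of _ 1] by simp
qed

definition bounded_ray_coordinates :: bool where
  "bounded_ray_coordinates \<longleftrightarrow> (\<forall>\<mu> \<rho>. maximal_cone C \<mu> \<and> \<rho> \<in> R \<longrightarrow>
     (\<forall>s\<in>\<mu>. -1 \<le> representation \<mu> \<rho> s \<and> representation \<mu> \<rho> s \<le> 1) \<and>
     card {s\<in>\<mu>. representation \<mu> \<rho> s = 1} \<le> 1)"

lemma bounded_ray_coordinates_iff:
  "bounded_ray_coordinates \<longleftrightarrow> (\<forall>\<mu> \<rho> b. maximal_cone C \<mu> \<and> \<rho> \<in> R \<and> \<rho> = (\<Sum>s\<in>\<mu>. b s *\<^sub>R s) \<longrightarrow>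
     (\<forall>s\<in>\<mu>. -1 \<le> b s \<and> b s \<le> 1) \<and> card {s\<in>\<mu>. b s = 1} \<le> 1)"
    (is "_ \<longleftrightarrow> (\<forall>\<mu> \<rho> b. ?hyp \<mu> \<rho> b \<longrightarrow> ?bounded \<mu> b)")
proof (intro iffI allI impI)
  fix \<mu> \<rho> b assume bounded: bounded_ray_coordinates and hyp: "?hyp \<mu> \<rho> b"
  then have coordinates: "\<forall>s\<in>\<mu>. representation \<mu> \<rho> s = b s"
    using representation_sum_scaleR[OF maximal_cone_basis(2) order_refl maximal_cone_basis(1)]
    by simp
  then have "{s\<in>\<mu>. representation \<mu> \<rho> s = 1} = {s\<in>\<mu>. b s = 1}" by auto
  moreover have "?bounded \<mu> (representation \<mu> \<rho>)"
    using bounded hyp unfolding bounded_ray_coordinates_def by blast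
  ultimately show "?bounded \<mu> b" using coordinates by auto
next
  assume bounded: "\<forall>\<mu> \<rho> b. ?hyp \<mu> \<rho> b \<longrightarrow> ?bounded \<mu> b"
  show bounded_ray_coordinates unfolding bounded_ray_coordinates_def
  proof (intro allI impI)
    fix \<mu> \<rho> assume "maximal_cone C \<mu> \<and> \<rho> \<in> R"
    then have "?hyp \<mu> \<rho> (representation \<mu> \<rho>)" using sum_representation_maximal_cone by auto
    then show "?bounded \<mu> (representation \<mu> \<rho>)" using bounded by blast
  qed
qed

lemma fano_coord_of_bounded:
  assumes bounded: bounded_ray_coordinates
  shows "fano_coord \<sigma>"
  unfolding fano_coord_def
proof (intro allI impI ballI)
  fix \<mu> \<rho> assume \<mu>: "maximal_cone C \<mu> \<and> \<sigma> \<subseteq> \<mu>" and \<rho>: "\<rho> \<in> R" "insert \<rho> \<sigma> \<in> C \<and> \<rho> \<notin> \<mu>"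
  define b where "b = representation \<mu> \<rho>"
  have fin: "finite \<mu>" using \<mu> maximal_cone_basis(1) by blast
  have b_Ints: "b t \<in> \<int>" for t using ray_representation_Ints \<mu> \<rho>(1) unfolding b_def by blast
  have b_le: "b t \<le> 1" and card_b: "card {s\<in>\<mu>. b s = 1} \<le> 1" if "t \<in> \<mu>" for t
    using bounded \<mu> \<rho>(1) that unfolding bounded_ray_coordinates_def b_def by blast+
  obtain t0 where t0: "t0 \<in> \<mu> - \<sigma>" "b t0 < 0"
    using ray_outside_maximal_cone_has_negative_coordinate[of \<mu> \<sigma> \<rho>] \<mu> \<rho> unfolding b_def by blast
  then have "b t0 \<le> -1" using Ints_less_imp_le_diff_1[OF b_Ints, of 0] by simp
  moreover have "sum b (\<mu> - \<sigma> - {t0}) \<le> 1"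
  proof (rule Ints_sum_le_1)
    have "card {t\<in>\<mu> - \<sigma> - {t0}. b t = 1} \<le> card {s\<in>\<mu>. b s = 1}"
      by (rule card_mono) (use fin in auto)
    then show "card {t\<in>\<mu> - \<sigma> - {t0}. b t = 1} \<le> 1" using card_b[of t0] t0(1) by simp
  qed (use fin b_Ints b_le in auto)
  moreover have "sum b (\<mu> - \<sigma>) = b t0 + sum b (\<mu> - \<sigma> - {t0})"
    using sum.remove[OF _ t0(1)] fin by blast
  ultimately show "(\<Sum>s\<in>\<mu> - \<sigma>. representation \<mu> \<rho> s) < 1" unfolding b_def by linarith
qed

lemma exists_primitive_subset:
  assumes "Q \<subseteq> R" "Q \<notin> C"
  obtains P where "P \<subseteq> Q" "primitive_set R C P"
proof -
  let ?N = "{P. P \<subseteq> Q \<and> P \<notin> C}"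
  have "?N \<subseteq> Pow Q" by blast
  then have "finite ?N" using finite_subset[OF assms(1) finite_rays] finite_subset by blast
  moreover have "Q \<in> ?N" using assms(2) by blast
  ultimately obtain P where P: "P \<in> ?N" "\<forall>P'\<in>?N. P' \<subseteq> P \<longrightarrow> P = P'"
    using finite_has_minimal2[of ?N Q] by blast
  have "primitive_set R C P" unfolding primitive_set_def
  proof (intro conjI allI impI)
    show "P \<subseteq> R" "P \<notin> C" using P(1) assms(1) by auto
    fix P' assume "P' \<subset> P"
    show "P' \<in> C"
    proof (rule ccontr)
      assume "P' \<notin> C"
      then have "P' \<in> ?N" using \<open>P' \<subset> P\<close> P(1) by blast
      then show False using P(2) \<open>P' \<subset> P\<close> by blast
    qed
  qed
  then show ?thesis using that P(1) by blast
qed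

lemma primitive_setD:
  assumes "primitive_set R C P"
  shows "P \<subseteq> R" "P \<notin> C" "\<And>y. y \<in> P \<Longrightarrow> P - {y} \<in> C" "\<And>x. x \<in> P \<Longrightarrow> P - {x} \<noteq> {}"
proof -
  show P: "P \<subseteq> R" "P \<notin> C" "\<And>y. y \<in> P \<Longrightarrow> P - {y} \<in> C"
    using assms unfolding primitive_set_def by auto
  show "P - {x} \<noteq> {}" if "x \<in> P" for x
  proof
    assume "P - {x} = {}"
    then have "P = {x}" using that by blast
    then show False using P(1,2) ray_cone that by blast
  qed
qed

lemma primitive_face_coordinates:
  assumes bounded: bounded_ray_coordinates and P: "primitive_set R C P" and x: "x \<in> P"
    and \<mu>: "maximal_cone C \<mu>" "P - {x} \<subseteq> \<mu>"
    and nonneg: "\<And>t. t \<in> \<mu> - (P - {x}) \<Longrightarrow> 0 \<le> representation \<mu> x t"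
  shows "\<And>y. y \<in> P - {x} \<Longrightarrow> representation \<mu> x y = -1"
    and "(\<Sum>t\<in>\<mu> - (P - {x}). representation \<mu> x t) \<le> 1"
proof -
  have xR: "x \<in> R" using primitive_setD(1)[OF P] x by blast
  have "x \<notin> \<mu>"
  proof
    assume "x \<in> \<mu>"
    then have "P \<subseteq> \<mu>" using \<mu>(2) by blast
    then show False using primitive_setD(2)[OF P] face_cone[OF maximal_cone_in_cones[OF \<mu>(1)]] by blast
  qed
  define b where "b = representation \<mu> x"
  have b_Ints: "b t \<in> \<int>" for t using ray_representation_Ints[OF \<mu>(1) xR] unfolding b_def .
  have adjacent: "insert x (P - {x} - {y}) \<in> C" if "y \<in> P - {x}" for y
  proof -
    have "insert x (P - {x} - {y}) = P - {y}" using that x by blast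
    then show ?thesis using primitive_setD(3)[OF P, of y] that by simp
  qed
  show b_face: "b y = -1" if y: "y \<in> P - {x}" for y
  proof -
    obtain t where "t \<in> \<mu> - (P - {x} - {y})" "b t < 0"
      using ray_outside_maximal_cone_has_negative_coordinate[OF \<mu>(1) _ adjacent[OF y] \<open>x \<notin> \<mu>\<close>] \<mu>(2)
      unfolding b_def by blast
    moreover have "t \<notin> \<mu> - (P - {x})" using nonneg \<open>b t < 0\<close> unfolding b_def by force
    ultimately have "b y < 0" by auto
    then have "b y \<le> -1" using Ints_less_imp_le_diff_1[OF b_Ints, of 0] by simp
    moreover have "-1 \<le> b y"
      using bounded \<mu> xR y unfolding bounded_ray_coordinates_def b_def by blast
    ultimately show "b y = -1" by simp
  qed
  obtain y0 where y0: "y0 \<in> P - {x}" using primitive_setD(4)[OF P x] by blast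
  have "sum b (\<mu> - (P - {x} - {y0})) < 1"
    using fano_coord_of_bounded[OF bounded] \<mu> xR adjacent[OF y0] \<open>x \<notin> \<mu>\<close>
    unfolding fano_coord_def b_def by blast
  moreover have "\<mu> - (P - {x} - {y0}) = insert y0 (\<mu> - (P - {x}))" using y0 \<mu>(2) by blast
  moreover have "finite (\<mu> - (P - {x}))" using maximal_cone_basis(1)[OF \<mu>(1)] by simp
  ultimately have "sum b (\<mu> - (P - {x})) < 2" using y0 b_face[OF y0] by simp
  then show "(\<Sum>t\<in>\<mu> - (P - {x}). representation \<mu> x t) \<le> 1"
    using Ints_less_imp_le_diff_1[of _ 2] b_Ints unfolding b_def by (simp add: Ints_sum)
qed

lemma primitive_sum_of_bounded:
  assumes bounded: bounded_ray_coordinates and P: "primitive_set R C P"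
  shows "\<Sum>P = 0 \<or> \<Sum>P \<in> R"
proof -
  have "P \<noteq> {}" using primitive_setD(2)[OF P] empty_cone by blast
  then obtain x where x: "x \<in> P" by blast
  define \<sigma> where "\<sigma> = P - {x}"
  have \<sigma>C: "\<sigma> \<in> C" using primitive_setD(3)[OF P x] unfolding \<sigma>_def .
  obtain \<mu> where \<mu>: "maximal_cone C \<mu>" "\<sigma> \<subseteq> \<mu>"
    and nonneg: "\<And>t. t \<in> \<mu> - \<sigma> \<Longrightarrow> 0 \<le> representation \<mu> x t"
    using maximal_cone_entered_from_face[OF \<sigma>C] by blast
  note face = primitive_face_coordinates[OF bounded P x \<mu>[unfolded \<sigma>_def] nonneg[unfolded \<sigma>_def]]
  have coordinates: "representation \<mu> (\<Sum>P) t = (if t \<in> \<sigma> then 0 else representation \<mu> x t)" for t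
  proof -
    have "finite P" using finite_subset[OF primitive_setD(1)[OF P] finite_rays] .
    from sum.remove[OF this x, of "\<lambda>t. t"] have "\<Sum>P = x + \<Sum>\<sigma>" unfolding \<sigma>_def .
    moreover have "representation \<mu> (\<Sum>\<sigma>) t = (if t \<in> \<sigma> then 1 else 0)"
      using representation_sum_scaleR[OF maximal_cone_basis(2)[OF \<mu>(1)] \<mu>(2) finite_cone[OF \<sigma>C],
          of "\<lambda>_. 1"] by simp
    ultimately show ?thesis using face(1) unfolding \<sigma>_def by (simp add: representation_maximal_cone \<mu>(1))
  qed
  have "(\<Sum>t\<in>\<mu> - {}. representation \<mu> (\<Sum>P) t) = (\<Sum>t\<in>\<mu> - \<sigma>. representation \<mu> x t)"
    unfolding coordinates using maximal_cone_basis(1)[OF \<mu>(1)] \<mu>(2)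
    by (simp add: sum.If_cases Diff_eq Int_absorb1)
  then have "(\<Sum>t\<in>\<mu> - {}. representation \<mu> (\<Sum>P) t) \<le> 1" using face(2) unfolding \<sigma>_def by simp
  moreover have "representation \<mu> (\<Sum>P) t \<in> \<int>" for t
    using coordinates ray_representation_Ints[OF \<mu>(1)] primitive_setD(1)[OF P] x by auto
  moreover have "0 \<le> representation \<mu> (\<Sum>P) t" if "t \<in> \<mu> - {}" for t
    using coordinates nonneg that by auto
  ultimately have "\<Sum>P \<in> span {} \<or> (\<exists>r\<in>\<mu> - {}. \<Sum>P - r \<in> span {})"
    by (intro span_cases_if_coordinate_sum_le_1[OF \<mu>(1)])
  then show ?thesis using cone_subset_rays maximal_cone_in_cones[OF \<mu>(1)] by auto
qed

section \<open>Descent on the negative part of a ray\<close>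

lemma fano_two_ray_sum:
  assumes \<sigma>: "\<sigma> \<in> C" "fano_coord \<sigma>" and \<rho>: "\<rho> \<in> R - \<sigma>" "insert \<rho> \<sigma> \<in> C"
    and s: "s \<in> R - \<sigma>" "insert s \<sigma> \<in> C" and not_cone: "insert s (insert \<rho> \<sigma>) \<notin> C"
  shows "\<rho> + s \<in> span \<sigma> \<or> (\<exists>r\<in>R - \<sigma>. insert r \<sigma> \<in> C \<and> \<rho> + s - r \<in> span \<sigma>)"
proof -
  obtain \<mu> where \<mu>: "maximal_cone C \<mu>" "\<sigma> \<subseteq> \<mu>"
    and nonneg: "\<And>t. t \<in> \<mu> - \<sigma> \<Longrightarrow> 0 \<le> representation \<mu> (\<rho> + s) t"
    using maximal_cone_entered_from_face[OF \<sigma>(1)] by blast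
  have Ints: "representation \<mu> (\<rho> + s) t \<in> \<int>" for t
    using ray_representation_Ints[OF \<mu>(1)] \<rho>(1) s(1) by (simp add: representation_maximal_cone \<mu>(1))
  have "\<not> (\<rho> \<in> \<mu> \<and> s \<in> \<mu>)"
  proof
    assume "\<rho> \<in> \<mu> \<and> s \<in> \<mu>"
    then have "insert s (insert \<rho> \<sigma>) \<subseteq> \<mu>" using \<mu>(2) by blast
    then show False using not_cone face_cone[OF maximal_cone_in_cones[OF \<mu>(1)]] by blast
  qed
  moreover have "(\<Sum>t\<in>\<mu> - \<sigma>. representation \<mu> (\<rho> + s) t)
      = (\<Sum>t\<in>\<mu> - \<sigma>. representation \<mu> \<rho> t) + (\<Sum>t\<in>\<mu> - \<sigma>. representation \<mu> s t)"
    by (simp add: representation_maximal_cone \<mu>(1) sum.distrib)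
  ultimately have "(\<Sum>t\<in>\<mu> - \<sigma>. representation \<mu> (\<rho> + s) t) \<le> 1"
    using fano_coord_coordinate_sum_le[OF \<sigma>(2) \<mu> \<rho>] fano_coord_coordinate_sum_le[OF \<sigma>(2) \<mu> s]
    by (simp split: if_splits)
  from span_cases_if_coordinate_sum_le_1[OF \<mu>(1) Ints nonneg this]
  have "\<rho> + s \<in> span \<sigma> \<or> (\<exists>r\<in>\<mu> - \<sigma>. \<rho> + s - r \<in> span \<sigma>)" .
  moreover have "r \<in> R - \<sigma> \<and> insert r \<sigma> \<in> C" if "r \<in> \<mu> - \<sigma>" for r
  proof -
    have "insert r \<sigma> \<subseteq> \<mu>" using that \<mu>(2) by blast
    then show ?thesis
      using that cone_subset_rays face_cone maximal_cone_in_cones[OF \<mu>(1)] by blast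
  qed
  ultimately show ?thesis by blast
qed

lemma fano_shifted_ray:
  assumes fano: "\<And>\<sigma>. \<sigma> \<in> C \<Longrightarrow> fano_coord \<sigma>" and \<mu>: "maximal_cone C \<mu>"
    and \<sigma>: "\<sigma> \<subseteq> \<mu>" "insert \<rho> \<sigma> \<in> C" and \<rho>: "\<rho> \<in> R - \<mu>"
    and s: "s \<in> \<mu> - \<sigma>" and not_cone: "insert s (insert \<rho> \<sigma>) \<notin> C"
  obtains v where "v \<in> span \<sigma> \<or> (v \<in> R \<and> insert v \<sigma> \<in> C)"
    "\<And>t. t \<in> \<mu> - \<sigma> \<Longrightarrow> representation \<mu> v t = representation \<mu> \<rho> t + (if t \<in> {s} then 1 else 0)"
proof -
  have \<sigma>C: "\<sigma> \<in> C" using face_cone[OF \<sigma>(2)] by blast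
  have sR: "s \<in> R" using s cone_subset_rays maximal_cone_in_cones[OF \<mu>] by blast
  have s_cone: "insert s \<sigma> \<in> C"
    using s \<sigma>(1) face_cone[OF maximal_cone_in_cones[OF \<mu>], of "insert s \<sigma>"] by blast
  have coord_s: "representation \<mu> (\<rho> + s) t = representation \<mu> \<rho> t + (if t \<in> {s} then 1 else 0)" for t
    using s by (simp add: representation_maximal_cone \<mu>)
  have "\<rho> \<in> R - \<sigma>" "s \<in> R - \<sigma>" using \<rho> \<sigma>(1) s sR by auto
  from fano_two_ray_sum[OF \<sigma>C fano[OF \<sigma>C] this(1) \<sigma>(2) this(2) s_cone not_cone]
  consider "\<rho> + s \<in> span \<sigma>" | r where "r \<in> R" "insert r \<sigma> \<in> C" "\<rho> + s - r \<in> span \<sigma>"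
    by blast
  then show ?thesis
  proof cases
    case 1
    then show ?thesis using that coord_s by blast
  next
    case (2 r)
    have "representation \<mu> r t = representation \<mu> \<rho> t + (if t \<in> {s} then 1 else 0)"
      if "t \<in> \<mu> - \<sigma>" for t
      using coordinate_outside_face_eq_zero[OF \<mu> \<sigma>(1) 2(3), of t] that coord_s[of t]
      by (simp add: representation_maximal_cone \<mu>)
    then show ?thesis using that 2 by blast
  qed
qed

lemma negative_face_extension:
  assumes \<mu>: "maximal_cone C \<mu>" and \<sigma>: "\<sigma> \<subseteq> \<mu>" "insert \<rho> \<sigma> \<in> C" and "\<rho> \<notin> \<mu>"
  obtains \<sigma>1 s where "\<sigma> \<subseteq> \<sigma>1" "\<sigma>1 \<subseteq> \<mu>" "insert \<rho> \<sigma>1 \<in> C"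
    "\<And>t. t \<in> \<sigma>1 - \<sigma> \<Longrightarrow> representation \<mu> \<rho> t < 0"
    "s \<in> \<mu> - \<sigma>1" "representation \<mu> \<rho> s < 0" "insert s (insert \<rho> \<sigma>1) \<notin> C"
proof -
  define F where "F = {\<sigma>1. \<sigma> \<subseteq> \<sigma>1 \<and> \<sigma>1 \<subseteq> \<sigma> \<union> {t\<in>\<mu>. representation \<mu> \<rho> t < 0} \<and> insert \<rho> \<sigma>1 \<in> C}"
  have "F \<subseteq> Pow \<mu>" using \<sigma>(1) unfolding F_def by blast
  then have "finite F"
    using finite_subset finite_Pow_iff[THEN iffD2, OF maximal_cone_basis(1)[OF \<mu>]] by blast
  moreover have "\<sigma> \<in> F" using \<sigma> unfolding F_def by blast
  ultimately obtain \<sigma>1 where "\<sigma>1 \<in> F" "\<sigma> \<subseteq> \<sigma>1" and \<sigma>1_max: "\<forall>\<sigma>2\<in>F. \<sigma>1 \<subseteq> \<sigma>2 \<longrightarrow> \<sigma>1 = \<sigma>2"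
    using finite_has_maximal2[of F \<sigma>] by blast
  then have \<sigma>1: "\<sigma>1 \<subseteq> \<mu>" "insert \<rho> \<sigma>1 \<in> C" "\<And>t. t \<in> \<sigma>1 - \<sigma> \<Longrightarrow> representation \<mu> \<rho> t < 0"
    using \<sigma>(1) unfolding F_def by auto
  obtain s where s: "s \<in> \<mu> - \<sigma>1" "representation \<mu> \<rho> s < 0"
    using ray_outside_maximal_cone_has_negative_coordinate[OF \<mu> \<sigma>1(1,2) assms(4)] by blast
  have "insert s (insert \<rho> \<sigma>1) \<notin> C"
  proof
    assume "insert s (insert \<rho> \<sigma>1) \<in> C"
    then have "insert s \<sigma>1 \<in> F" using \<open>\<sigma>1 \<in> F\<close> s unfolding F_def by (auto simp: insert_commute)
    then show False using \<sigma>1_max s(1) by blast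
  qed
  then show ?thesis using that \<open>\<sigma> \<subseteq> \<sigma>1\<close> \<sigma>1 s by blast
qed

lemma fano_descent_step:
  assumes fano: "\<And>\<sigma>. \<sigma> \<in> C \<Longrightarrow> fano_coord \<sigma>" and \<mu>: "maximal_cone C \<mu>"
    and \<sigma>: "\<sigma> \<subseteq> \<mu>" "insert \<rho> \<sigma> \<in> C" and \<rho>: "\<rho> \<in> R - \<mu>"
    and IH: "\<And>\<sigma>' r. \<sigma>' \<subseteq> \<mu> \<Longrightarrow> insert r \<sigma>' \<in> C \<Longrightarrow> r \<in> R - \<mu> \<Longrightarrow>
        neg_part_sum \<mu> \<sigma>' r \<le> neg_part_sum \<mu> \<sigma> \<rho> - 1 \<Longrightarrow> pos_part_sum \<mu> \<sigma>' r \<le> 1"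
  shows "pos_part_sum \<mu> \<sigma> \<rho> \<le> 1"
proof -
  have fin: "finite \<mu>" using maximal_cone_basis(1)[OF \<mu>] .
  obtain \<sigma>1 s where \<sigma>1: "\<sigma> \<subseteq> \<sigma>1" "\<sigma>1 \<subseteq> \<mu>" "insert \<rho> \<sigma>1 \<in> C"
      "\<And>t. t \<in> \<sigma>1 - \<sigma> \<Longrightarrow> representation \<mu> \<rho> t < 0"
    and s: "s \<in> \<mu> - \<sigma>1" "representation \<mu> \<rho> s < 0" "insert s (insert \<rho> \<sigma>1) \<notin> C"
    using negative_face_extension[OF \<mu> \<sigma>] \<rho> by blast
  obtain v where v: "v \<in> span \<sigma>1 \<or> (v \<in> R \<and> insert v \<sigma>1 \<in> C)"
    and v_coord: "\<And>t. t \<in> \<mu> - \<sigma>1 \<Longrightarrow>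
      representation \<mu> v t = representation \<mu> \<rho> t + (if t \<in> {s} then 1 else 0)"
    using fano_shifted_ray[OF fano \<mu> \<sigma>1(2,3) \<rho> s(1,3)] by metis
  have "pos_part_sum \<mu> \<sigma> \<rho> = pos_part_sum \<mu> \<sigma>1 \<rho>"
    unfolding pos_part_sum_def by (rule sum.mono_neutral_right) (use fin \<sigma>1(1,4) in auto)
  moreover have "neg_part_sum \<mu> \<sigma>1 \<rho> \<le> neg_part_sum \<mu> \<sigma> \<rho>"
    unfolding neg_part_sum_def by (rule sum_mono2) (use fin \<sigma>1(1) in auto)
  moreover have "representation \<mu> \<rho> s \<le> -1"
    using Ints_less_imp_le_diff_1[OF ray_representation_Ints[OF \<mu>] _ s(2)] \<rho> by simp
  then have shift: "pos_part_sum \<mu> \<sigma>1 \<rho> \<le> pos_part_sum \<mu> \<sigma>1 v"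
    "neg_part_sum \<mu> \<sigma>1 v \<le> neg_part_sum \<mu> \<sigma>1 \<rho> - 1"
    using part_sums_shift[of \<mu> \<sigma>1 "{s}" \<rho> v] fin s(1) v_coord by auto
  moreover have "pos_part_sum \<mu> \<sigma>1 v \<le> 1"
  proof (cases "v \<in> span \<sigma>1")
    case True
    then show ?thesis
      using pos_part_sum_eq_0_if_in_span[OF maximal_cone_basis(2)[OF \<mu>] \<sigma>1(2)] by simp
  next
    case False
    then have "v \<in> R" "insert v \<sigma>1 \<in> C" using v by auto
    then show ?thesis
      using pos_part_sum_basis_le_1[OF maximal_cone_basis(2,1)[OF \<mu>]] IH[OF \<sigma>1(2)] shift(2)
        \<open>neg_part_sum \<mu> \<sigma>1 \<rho> \<le> neg_part_sum \<mu> \<sigma> \<rho>\<close> by (cases "v \<in> \<mu>") auto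
  qed
  ultimately show ?thesis by linarith
qed

lemma pos_part_sum_le_1_of_fano:
  assumes fano: "\<And>\<sigma>. \<sigma> \<in> C \<Longrightarrow> fano_coord \<sigma>" and \<mu>: "maximal_cone C \<mu>"
    and "\<sigma> \<subseteq> \<mu>" "insert \<rho> \<sigma> \<in> C" "\<rho> \<in> R - \<mu>"
  shows "pos_part_sum \<mu> \<sigma> \<rho> \<le> 1"
proof -
  have "(\<lambda>(\<sigma>, \<rho>). \<sigma> \<subseteq> \<mu> \<longrightarrow> insert \<rho> \<sigma> \<in> C \<longrightarrow> \<rho> \<in> R - \<mu> \<longrightarrow> pos_part_sum \<mu> \<sigma> \<rho> \<le> 1) (\<sigma>, \<rho>)"
  proof (rule nonneg_real_measure_induct[where f = "\<lambda>(\<sigma>, \<rho>). neg_part_sum \<mu> \<sigma> \<rho>"])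
    show "0 \<le> (\<lambda>(\<sigma>, \<rho>). neg_part_sum \<mu> \<sigma> \<rho>) x" for x
      by (simp add: neg_part_sum_nonneg split: prod.split)
    fix x :: "(real^'n) set \<times> (real^'n)"
    assume IH: "\<And>y. (\<lambda>(\<sigma>, \<rho>). neg_part_sum \<mu> \<sigma> \<rho>) y \<le> (\<lambda>(\<sigma>, \<rho>). neg_part_sum \<mu> \<sigma> \<rho>) x - 1 \<Longrightarrow>
      (\<lambda>(\<sigma>, \<rho>). \<sigma> \<subseteq> \<mu> \<longrightarrow> insert \<rho> \<sigma> \<in> C \<longrightarrow> \<rho> \<in> R - \<mu> \<longrightarrow> pos_part_sum \<mu> \<sigma> \<rho> \<le> 1) y"
    obtain \<sigma>0 \<rho>0 where x: "x = (\<sigma>0, \<rho>0)" by (cases x)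
    show "(\<lambda>(\<sigma>, \<rho>). \<sigma> \<subseteq> \<mu> \<longrightarrow> insert \<rho> \<sigma> \<in> C \<longrightarrow> \<rho> \<in> R - \<mu> \<longrightarrow> pos_part_sum \<mu> \<sigma> \<rho> \<le> 1) x"
      unfolding x prod.case
    proof (intro impI)
      assume \<sigma>0: "\<sigma>0 \<subseteq> \<mu>" "insert \<rho>0 \<sigma>0 \<in> C" and \<rho>0: "\<rho>0 \<in> R - \<mu>"
      show "pos_part_sum \<mu> \<sigma>0 \<rho>0 \<le> 1"
      proof (rule fano_descent_step[OF fano \<mu> \<sigma>0 \<rho>0])
        fix \<sigma>' r assume "\<sigma>' \<subseteq> \<mu>" "insert r \<sigma>' \<in> C" "r \<in> R - \<mu>"
          "neg_part_sum \<mu> \<sigma>' r \<le> neg_part_sum \<mu> \<sigma>0 \<rho>0 - 1"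
        then show "pos_part_sum \<mu> \<sigma>' r \<le> 1" using IH[of "(\<sigma>', r)"] unfolding x by simp
      qed
    qed
  qed
  then show ?thesis using assms(3-5) by simp
qed

lemma primitive_set_of_negative_coordinates:
  assumes \<mu>: "maximal_cone C \<mu>" and \<rho>: "\<rho> \<in> R - \<mu>"
  obtains A where "primitive_set R C (insert \<rho> A)" "\<rho> \<notin> A" "A \<noteq> {}" "A \<subseteq> \<mu>"
    "\<And>t. t \<in> A \<Longrightarrow> representation \<mu> \<rho> t < 0"
proof -
  define \<nu> where "\<nu> = {t\<in>\<mu>. representation \<mu> \<rho> t < 0}"
  have \<nu>\<mu>: "\<nu> \<subseteq> \<mu>" unfolding \<nu>_def by blast
  have "insert \<rho> \<nu> \<notin> C"
  proof
    assume "insert \<rho> \<nu> \<in> C"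
    from ray_outside_maximal_cone_has_negative_coordinate[OF \<mu> \<nu>\<mu> this] \<rho>
    show False unfolding \<nu>_def by auto
  qed
  moreover have "insert \<rho> \<nu> \<subseteq> R"
    using \<rho> \<nu>\<mu> cone_subset_rays[OF maximal_cone_in_cones[OF \<mu>]] by blast
  ultimately obtain P where P: "P \<subseteq> insert \<rho> \<nu>" "primitive_set R C P"
    using exists_primitive_subset by metis
  have "\<rho> \<in> P"
    using P(1) primitive_setD(2)[OF P(2)] \<nu>\<mu> face_cone[OF maximal_cone_in_cones[OF \<mu>], of P] by blast
  then have P_eq: "P = insert \<rho> (P - {\<rho>})" by blast
  have "P - {\<rho>} \<noteq> {}" using primitive_setD(4)[OF P(2) \<open>\<rho> \<in> P\<close>] .
  moreover have "P - {\<rho>} \<subseteq> \<nu>" using P(1) by blast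
  ultimately show ?thesis using that[of "P - {\<rho>}"] P(2) P_eq \<nu>\<mu> unfolding \<nu>_def by auto
qed

lemma primitive_descent_step:
  assumes primitive: "\<forall>P. primitive_set R C P \<longrightarrow> \<Sum>P = 0 \<or> \<Sum>P \<in> R"
    and \<mu>: "maximal_cone C \<mu>" and \<rho>: "\<rho> \<in> R - \<mu>"
    and IH: "\<And>r. r \<in> R - \<mu> \<Longrightarrow> neg_part_sum \<mu> {} r \<le> neg_part_sum \<mu> {} \<rho> - 1 \<Longrightarrow>
      pos_part_sum \<mu> {} r \<le> 1"
  shows "pos_part_sum \<mu> {} \<rho> \<le> 1"
proof -
  obtain A where P: "primitive_set R C (insert \<rho> A)" and A: "\<rho> \<notin> A" "A \<noteq> {}" "A \<subseteq> \<mu>"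
    and negative: "\<And>t. t \<in> A \<Longrightarrow> representation \<mu> \<rho> t < 0"
    using primitive_set_of_negative_coordinates[OF \<mu> \<rho>] by blast
  have fin: "finite \<mu>" "finite A" using maximal_cone_basis(1)[OF \<mu>] finite_subset[OF A(3)] by auto
  have "representation \<mu> \<rho> t \<le> -1" if "t \<in> A" for t
    using negative[OF that] ray_representation_Ints[OF \<mu>] \<rho> Ints_less_imp_le_diff_1[of _ 0] by force
  moreover have "representation \<mu> (\<Sum>(insert \<rho> A)) t
      = representation \<mu> \<rho> t + (if t \<in> A then 1 else 0)" for t
  proof -
    have "representation \<mu> (\<Sum>A) t = (if t \<in> A then 1 else 0)"
      using representation_sum_scaleR[OF maximal_cone_basis(2)[OF \<mu>] A(3) fin(2), of "\<lambda>_. 1"] by simp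
    then show ?thesis using A(1) fin(2) by (simp add: representation_maximal_cone \<mu>)
  qed
  ultimately have shift: "pos_part_sum \<mu> {} \<rho> \<le> pos_part_sum \<mu> {} (\<Sum>(insert \<rho> A))"
    "neg_part_sum \<mu> {} (\<Sum>(insert \<rho> A)) \<le> neg_part_sum \<mu> {} \<rho> - 1"
    using part_sums_shift[of \<mu> "{}" A \<rho> "\<Sum>(insert \<rho> A)"] fin A by auto
  have "pos_part_sum \<mu> {} (\<Sum>(insert \<rho> A)) \<le> 1"
  proof (cases "\<Sum>(insert \<rho> A) = 0")
    case True
    then show ?thesis
      using pos_part_sum_eq_0_if_in_span[OF maximal_cone_basis(2)[OF \<mu>], of "{}"] by simp
  next
    case False
    then have "\<Sum>(insert \<rho> A) \<in> R" using primitive P by blast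
    then show ?thesis
      using pos_part_sum_basis_le_1[OF maximal_cone_basis(2,1)[OF \<mu>]] IH shift(2)
      by (cases "\<Sum>(insert \<rho> A) \<in> \<mu>") auto
  qed
  then show ?thesis using shift(1) by linarith
qed

lemma pos_part_sum_le_1_of_primitive:
  assumes primitive: "\<forall>P. primitive_set R C P \<longrightarrow> \<Sum>P = 0 \<or> \<Sum>P \<in> R"
    and \<mu>: "maximal_cone C \<mu>" and "\<rho> \<in> R - \<mu>"
  shows "pos_part_sum \<mu> {} \<rho> \<le> 1"
proof -
  have "\<rho> \<in> R - \<mu> \<longrightarrow> pos_part_sum \<mu> {} \<rho> \<le> 1"
  proof (rule nonneg_real_measure_induct[where f = "neg_part_sum \<mu> {}"])
    show "0 \<le> neg_part_sum \<mu> {} x" for x by (rule neg_part_sum_nonneg)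
    fix x
    assume IH: "\<And>y. neg_part_sum \<mu> {} y \<le> neg_part_sum \<mu> {} x - 1 \<Longrightarrow>
      y \<in> R - \<mu> \<longrightarrow> pos_part_sum \<mu> {} y \<le> 1"
    show "x \<in> R - \<mu> \<longrightarrow> pos_part_sum \<mu> {} x \<le> 1"
    proof
      assume "x \<in> R - \<mu>"
      show "pos_part_sum \<mu> {} x \<le> 1"
        by (rule primitive_descent_step[OF primitive \<mu> \<open>x \<in> R - \<mu>\<close>]) (use IH in blast)
    qed
  qed
  then show ?thesis using assms(3) by blast
qed

lemma bounded_of_pos_part_sum_le_1:
  assumes up: "\<And>\<mu> \<rho>. maximal_cone C \<mu> \<Longrightarrow> \<rho> \<in> R - \<mu> \<Longrightarrow> pos_part_sum \<mu> {} \<rho> \<le> 1"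
  shows bounded_ray_coordinates
  unfolding bounded_ray_coordinates_def
proof (intro allI impI)
  fix \<mu> \<rho> assume "maximal_cone C \<mu> \<and> \<rho> \<in> R"
  then have \<mu>: "maximal_cone C \<mu>" and \<rho>: "\<rho> \<in> R" by auto
  have le_1: "representation \<mu>' \<rho>' s \<le> 1"
    if "maximal_cone C \<mu>'" "\<rho>' \<in> R - \<mu>'" "s \<in> \<mu>'" for \<mu>' \<rho>' s
    using pos_part_sum_le_1D(1)[OF _ up[OF that(1,2)]] maximal_cone_basis(1)[OF that(1)] that(3)
    by simp
  show "(\<forall>s\<in>\<mu>. -1 \<le> representation \<mu> \<rho> s \<and> representation \<mu> \<rho> s \<le> 1)
      \<and> card {s\<in>\<mu>. representation \<mu> \<rho> s = 1} \<le> 1"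
  proof (cases "\<rho> \<in> \<mu>")
    case True
    then have "{s\<in>\<mu>. representation \<mu> \<rho> s = 1} = {\<rho>}"
      by (auto simp: representation_maximal_cone \<mu>)
    then show ?thesis using True by (simp add: representation_maximal_cone \<mu>)
  next
    case False
    then have "\<rho> \<in> R - \<mu>" using \<rho> by blast
    moreover have "finite (\<mu> - {})" using maximal_cone_basis(1)[OF \<mu>] by simp
    ultimately show ?thesis
      using le_1[OF \<mu>] coordinate_lower_bound_of_upper_bound[OF le_1 \<mu>]
        pos_part_sum_le_1D(2)[OF _ up[OF \<mu>], of \<rho>] by simp
  qed
qed

end

theorem theorem3p1:
  fixes R :: "(real^'n) set" and C :: "(real^'n) set set"
  assumes "complete_nonsingular_fan R C"
  shows "((fano_fan R C \<and> (\<forall>\<sigma>\<in>C. fano_orbit_closure R C \<sigma>))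
           \<longleftrightarrow> (\<forall>P. primitive_set R C P \<longrightarrow> (\<Sum>P = 0 \<or> \<Sum>P \<in> R)))
       \<and> ((\<forall>P. primitive_set R C P \<longrightarrow> (\<Sum>P = 0 \<or> \<Sum>P \<in> R))
           \<longleftrightarrow> (\<forall>\<mu> \<rho> b. maximal_cone C \<mu> \<and> \<rho> \<in> R \<and> \<rho> = (\<Sum>s\<in>\<mu>. b s *\<^sub>R s) \<longrightarrow>
                  (\<forall>s\<in>\<mu>. -1 \<le> b s \<and> b s \<le> 1) \<and> card {s\<in>\<mu>. b s = 1} \<le> 1))"
proof -
  interpret toric_fan R C by (rule toric_fan.intro) (rule assms)
  have i_iff: "fano_fan R C \<and> (\<forall>\<sigma>\<in>C. fano_orbit_closure R C \<sigma>) \<longleftrightarrow> (\<forall>\<sigma>\<in>C. fano_coord \<sigma>)"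
    unfolding fano_fan_def using empty_cone fano_orbit_closure_iff_fano_coord by blast
  have i_iii: "(\<forall>\<sigma>\<in>C. fano_coord \<sigma>) \<longleftrightarrow> bounded_ray_coordinates"
  proof
    assume fano: "\<forall>\<sigma>\<in>C. fano_coord \<sigma>"
    have "pos_part_sum \<mu> {} \<rho> \<le> 1" if "maximal_cone C \<mu>" "\<rho> \<in> R - \<mu>" for \<mu> \<rho>
      using pos_part_sum_le_1_of_fano[of \<mu> "{}" \<rho>] fano that ray_cone by auto
    then show bounded_ray_coordinates by (rule bounded_of_pos_part_sum_le_1)
  qed (use fano_coord_of_bounded in blast)
  have ii_iii: "(\<forall>P. primitive_set R C P \<longrightarrow> \<Sum>P = 0 \<or> \<Sum>P \<in> R) \<longleftrightarrow> bounded_ray_coordinates"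
  proof
    assume "\<forall>P. primitive_set R C P \<longrightarrow> \<Sum>P = 0 \<or> \<Sum>P \<in> R"
    from pos_part_sum_le_1_of_primitive[OF this] show bounded_ray_coordinates
      by (rule bounded_of_pos_part_sum_le_1)
  qed (use primitive_sum_of_bounded in blast)
  show ?thesis unfolding i_iff i_iii ii_iii bounded_ray_coordinates_iff[symmetric] by simp
qed

end
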